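(* Let $0<c<1$ be a constant and $\mu=\mu(n)$ a function with $\mu(n)\to\infty$. For every strategy $\mathcal{S}_1$ there exists a strategy $\mathcal{S}_2$ which is $2\mu$-well-behaved for $cn$ rounds, which never creates a multi-edge (so $G^{\mathcal{S}_2}_{cn}(n)$ is simple), and which satisfies $\mathbb{P}[G^{\mathcal{S}_1}_{cn}(n)\in\mathtt{PM}(\mu,\mu^{-1})]\le\mathbb{P}[G^{\mathcal{S}_2}_{cn}(n)\in\mathtt{PM}(2\mu,\mu^{-1})]$.
   Context: Semi-random graph process: start from the empty graph on $[n]$; in round $t$ a vertex $u_t$ (square) is chosen uniformly at random from $[n]$ independently, the player chooses $v_t$ (circle) based on the history and $u_t$, and the edge $u_tv_t$ is added; $G^{\mathcal{S}}_t(n)$ denotes the graph after $t$ rounds under strategy $\mathcal{S}$, viewed as a directed graph with arc $u_t\to v_t$ for each round. Numbers such as $cn$ are rounded down. A vertex $j$ is covered by the circle of round $t$ if $v_t=j$. A strategy is $\omega$-well-behaved for $cn$ rounds if for all $0\le t\le\lfloor cn\rfloor$ every vertex of $G_t$ is covered by at most $\omega$ circles. For a directed graph $D$ with $m$ arcs on $[n]$, $D\in\mathtt{PM}(\mu,\delta)$ if there is $S\subseteq[n]$ such that $D[S]$ has a perfect matching, every vertex of $S$ has in-degree at most $\mu$ in $D$, and $|S|\ge n-2m\delta$. *)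

theory Defs
  imports Complex_Main
begin

(* Vertex set [n] is rendered as {..<n}.  A (deterministic) strategy maps the
   history (chronological list of arcs (u_s, v_s) of previous rounds) and the
   current square u_t to the circle v_t. *)
type_synonym strategy = "(nat \<times> nat) list \<Rightarrow> nat \<Rightarrow> nat"

definition valid_strategy :: "nat \<Rightarrow> strategy \<Rightarrow> bool" where
  "valid_strategy n S \<longleftrightarrow> (\<forall>h u. u < n \<longrightarrow> S h u < n)"

fun play_aux :: "strategy \<Rightarrow> (nat \<times> nat) list \<Rightarrow> nat list \<Rightarrow> (nat \<times> nat) list" where
  "play_aux S h [] = h"
| "play_aux S h (u # us) = play_aux S (h @ [(u, S h u)]) us"

definition play :: "strategy \<Rightarrow> nat list \<Rightarrow> (nat \<times> nat) list" where
  "play S us = play_aux S [] us"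

(* all square sequences of length T on [n]; each has probability n^(-T) *)
definition squares :: "nat \<Rightarrow> nat \<Rightarrow> nat list set" where
  "squares n T = {us. length us = T \<and> set us \<subseteq> {..<n}}"

definition prob_graph :: "nat \<Rightarrow> nat \<Rightarrow> strategy \<Rightarrow> ((nat \<times> nat) list \<Rightarrow> bool) \<Rightarrow> real" where
  "prob_graph n T S P = real (card {us \<in> squares n T. P (play S us)}) / real n ^ T"

(* number of circles on j = in-degree of j *)
definition indeg :: "(nat \<times> nat) list \<Rightarrow> nat \<Rightarrow> nat" where
  "indeg D j = length (filter (\<lambda>a. snd a = j) D)"

definition well_behaved :: "nat \<Rightarrow> real \<Rightarrow> nat \<Rightarrow> strategy \<Rightarrow> bool" where
  "well_behaved n \<omega> T S \<longleftrightarrow>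
     (\<forall>us \<in> squares n T. \<forall>t \<le> T. \<forall>j < n. real (indeg (take t (play S us)) j) \<le> \<omega>)"

definition simple_strategy :: "nat \<Rightarrow> nat \<Rightarrow> strategy \<Rightarrow> bool" where
  "simple_strategy n T S \<longleftrightarrow>
     (\<forall>us \<in> squares n T.
        (\<forall>(u, v) \<in> set (play S us). u \<noteq> v) \<and>
        distinct (map (\<lambda>(u, v). {u, v}) (play S us)))"

definition has_pm_on :: "(nat \<times> nat) list \<Rightarrow> nat set \<Rightarrow> bool" where
  "has_pm_on D S \<longleftrightarrow>
     (\<exists>M \<subseteq> set D. (\<forall>(u, v) \<in> M. u \<in> S \<and> v \<in> S \<and> u \<noteq> v) \<and>
                   (\<forall>x \<in> S. \<exists>!e \<in> M. x = fst e \<or> x = snd e))"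

definition PM :: "nat \<Rightarrow> real \<Rightarrow> real \<Rightarrow> (nat \<times> nat) list \<Rightarrow> bool" where
  "PM n \<mu> \<delta> D \<longleftrightarrow>
     (\<exists>S \<subseteq> {..<n}. has_pm_on D S \<and> (\<forall>v \<in> S. real (indeg D v) \<le> \<mu>) \<and>
                    real (card S) \<ge> real n - 2 * real (length D) * \<delta>)"

end

theory Submission
  imports Defs
begin

(* The strategy S2 replays S1 on the same squares and copies its circle v, unless this
   would create a loop or a multi-edge or raise the in-degree of v above 2 mu; then it
   takes a fresh circle of in-degree below mu - 1.  In round t at most 1 + t + t/(mu - 1)
   vertices are unsuitable as a fresh circle (the square, its neighbours, and vertices of
   large in-degree), which is less than n for t < cn once mu > 1/(1 - c).
   Fresh circles keep the in-degree of every vertex in G2 within mu of its in-degree in G1.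
   So when S1 plays an arc (u, v) whose head ends with in-degree at most mu, v has
   in-degree at most 2 mu - 1 in G2 at that time and the edge uv is copied or already
   present.  Hence a perfect matching of G1[S] witnessing PM(mu, 1/mu) survives in the
   simple graph G2, where it witnesses PM(2 mu, 1/mu). *)

abbreviation uedge :: "nat \<times> nat \<Rightarrow> nat set" where
  "uedge \<equiv> \<lambda>(u, v). {u, v}"

lemma fst_or_snd_iff_mem_uedge: "x = fst a \<or> x = snd a \<longleftrightarrow> x \<in> uedge a"
  by (cases a) auto

lemma play_aux_append: "play_aux S h (xs @ ys) = play_aux S (play_aux S h xs) ys"
  by (induction xs arbitrary: h) auto

lemma play_Nil [simp]: "play S [] = []"
  by (simp add: play_def)

lemma play_snoc [simp]: "play S (xs @ [x]) = play S xs @ [(x, S (play S xs) x)]"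
  by (simp add: play_def play_aux_append)

lemma length_play [simp]: "length (play S xs) = length xs"
  by (induction xs rule: rev_induct) auto

lemma map_fst_play [simp]: "map fst (play S xs) = xs"
  by (induction xs rule: rev_induct) auto

lemma take_play: "take k (play S xs) = play S (take k xs)"
proof (induction xs rule: rev_induct)
  case (snoc x xs)
  then show ?case by (cases "k \<le> length xs") (auto simp: take_append)
qed simp

lemma indeg_Nil [simp]: "indeg [] j = 0"
  by (simp add: indeg_def)

lemma indeg_snoc [simp]: "indeg (h @ [(u, w)]) j = indeg h j + (if w = j then 1 else 0)"
  by (simp add: indeg_def)

lemma sum_indeg_le_length: "(\<Sum>w\<in>K. indeg h w) \<le> length h"
proof (induction h)
  case Nil
  then show ?case by simp
next
  case (Cons a h)
  have "indeg (a # h) w = (if snd a = w then 1 else 0) + indeg h w" for w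
    by (simp add: indeg_def)
  then have "(\<Sum>w\<in>K. indeg (a # h) w) = (\<Sum>w\<in>K. if snd a = w then 1 else 0) + (\<Sum>w\<in>K. indeg h w)"
    by (simp add: sum.distrib)
  also have "(\<Sum>w\<in>K. if snd a = w then 1 else 0 :: nat) \<le> 1"
    by (cases "finite K") simp_all
  finally show ?case using Cons by simp
qed

lemma card_mult_le_length_if_indeg_ge:
  assumes "\<And>w. w \<in> K \<Longrightarrow> a \<le> real (indeg h w)"
  shows "real (card K) * a \<le> real (length h)"
proof -
  have "real (card K) * a \<le> (\<Sum>w\<in>K. real (indeg h w))"
    using sum_mono[of K "\<lambda>_. a", OF assms] by (cases "finite K") (simp_all add: mult.commute)
  also have "\<dots> \<le> real (length h)"
    using sum_indeg_le_length[where K = K and h = h] by (simp flip: of_nat_sum)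
  finally show ?thesis .
qed

lemma has_pm_on_if_edges_kept:
  assumes pm: "has_pm_on D S" and distinct: "distinct (map uedge D')"
    and kept: "\<And>u v. (u, v) \<in> set D \<Longrightarrow> u \<in> S \<Longrightarrow> v \<in> S \<Longrightarrow> u \<noteq> v \<Longrightarrow>
      {u, v} \<in> uedge ` set D'"
  shows "has_pm_on D' S"
proof -
  obtain M where M: "M \<subseteq> set D" "\<forall>(u, v) \<in> M. u \<in> S \<and> v \<in> S \<and> u \<noteq> v"
    and unique: "\<forall>x \<in> S. \<exists>!e \<in> M. x \<in> uedge e"
    using pm unfolding has_pm_on_def fst_or_snd_iff_mem_uedge by blast
  have inj: "inj_on uedge (set D')"
    using distinct by (simp add: distinct_map)
  define M' where "M' = {a \<in> set D'. uedge a \<in> uedge ` M}"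
  have M'_unique: "\<exists>!a \<in> M'. x \<in> uedge a" if "x \<in> S" for x
  proof -
    obtain e where e: "e \<in> M" "x \<in> uedge e"
      and e_unique: "\<And>e'. e' \<in> M \<Longrightarrow> x \<in> uedge e' \<Longrightarrow> e' = e"
      using unique \<open>x \<in> S\<close> by blast
    obtain a where a: "a \<in> set D'" "uedge a = uedge e"
      using kept M e(1) by (cases e) fastforce
    show ?thesis
    proof (rule ex1I[of _ a])
      show "a \<in> M' \<and> x \<in> uedge a"
        using a e by (auto simp: M'_def)
    next
      fix b assume b: "b \<in> M' \<and> x \<in> uedge b"
      then have "b \<in> set D'" "uedge b \<in> uedge ` M"
        by (simp_all add: M'_def)
      then obtain e' where "e' \<in> M" "uedge b = uedge e'"
        by (elim imageE) simp
      then have "uedge b = uedge a"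
        using b e_unique a(2) by simp
      then show "b = a"
        using inj_onD[OF inj _ \<open>b \<in> set D'\<close> a(1)] by simp
    qed
  qed
  have M'_edges: "u \<in> S \<and> v \<in> S \<and> u \<noteq> v" if "(u, v) \<in> M'" for u v
  proof -
    from that have "{u, v} \<in> uedge ` M"
      by (simp add: M'_def)
    then obtain e where "e \<in> M" "{u, v} = uedge e"
      by (elim imageE) simp
    then show ?thesis
      using M(2) by (cases e) (auto simp: doubleton_eq_iff)
  qed
  show ?thesis
    unfolding has_pm_on_def fst_or_snd_iff_mem_uedge
  proof (intro exI[of _ M'] conjI)
    show "M' \<subseteq> set D'"
      by (simp add: M'_def)
    show "\<forall>(u, v) \<in> M'. u \<in> S \<and> v \<in> S \<and> u \<noteq> v"
      using M'_edges by blast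
    show "\<forall>x \<in> S. \<exists>!e. e \<in> M' \<and> x \<in> uedge e"
      using M'_unique by blast
  qed
qed

definition copy_allowed :: "real \<Rightarrow> (nat \<times> nat) list \<Rightarrow> nat \<Rightarrow> nat \<Rightarrow> bool" where
  "copy_allowed m h u v \<longleftrightarrow>
     v \<noteq> u \<and> {u, v} \<notin> uedge ` set h \<and> real (indeg h v) + 1 \<le> 2 * m"

definition fresh_circle :: "nat \<Rightarrow> real \<Rightarrow> (nat \<times> nat) list \<Rightarrow> nat \<Rightarrow> nat \<Rightarrow> bool" where
  "fresh_circle n m h u w \<longleftrightarrow>
     w < n \<and> w \<noteq> u \<and> {u, w} \<notin> uedge ` set h \<and> real (indeg h w) + 1 \<le> m"

(* map fst h is the square sequence so far, so S is consulted on the graph it would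
   have built itself.  The fallback u is never reached within the round budget. *)
definition copy_strategy :: "nat \<Rightarrow> real \<Rightarrow> strategy \<Rightarrow> strategy" where
  "copy_strategy n m S h u =
     (let v = S (play S (map fst h)) u in
      if copy_allowed m h u v then v
      else if \<exists>w. fresh_circle n m h u w then SOME w. fresh_circle n m h u w
      else u)"

lemma valid_copy_strategy:
  assumes "valid_strategy n S"
  shows "valid_strategy n (copy_strategy n m S)"
  unfolding valid_strategy_def
proof (intro allI impI)
  fix h u assume "u < n"
  moreover have "(\<exists>w. fresh_circle n m h u w) \<Longrightarrow> (SOME w. fresh_circle n m h u w) < n"
    by (metis fresh_circle_def someI_ex)
  ultimately show "copy_strategy n m S h u < n"
    using assms by (auto simp: copy_strategy_def Let_def valid_strategy_def)
qed

lemma fresh_circle_exists: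
  assumes m: "1 < m" and budget: "1 + real (length h) + real (length h) / (m - 1) < real n"
  shows "\<exists>w. fresh_circle n m h u w"
proof (rule ccontr)
  assume no_fresh: "\<nexists>w. fresh_circle n m h u w"
  define N where "N = (\<lambda>a. if fst a = u then snd a else fst a) ` set h"
  define K where "K = {w \<in> {..<n}. m - 1 < real (indeg h w)}"
  have "{..<n} \<subseteq> insert u (N \<union> K)"
  proof
    fix w assume w: "w \<in> {..<n}"
    show "w \<in> insert u (N \<union> K)"
    proof (cases "w = u \<or> w \<in> K")
      case False
      then have "{u, w} \<in> uedge ` set h"
        using no_fresh w by (auto simp: fresh_circle_def K_def)
      then obtain p q where "(p, q) \<in> set h" "{u, w} = {p, q}" by auto
      then have "w \<in> N"
        using False by (auto simp: N_def doubleton_eq_iff intro!: rev_image_eqI[of "(p, q)"])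
      then show ?thesis by simp
    qed auto
  qed
  moreover have fin: "finite (N \<union> K)" by (simp add: N_def K_def)
  ultimately have "n \<le> card (insert u (N \<union> K))"
    using card_mono[of "insert u (N \<union> K)" "{..<n}"] by simp
  also have "\<dots> \<le> 1 + card N + card K"
    using card_Un_le[of N K] fin by (simp add: card_insert_if)
  finally have "real n \<le> 1 + real (card N) + real (card K)" by linarith
  moreover have "card N \<le> length h"
    unfolding N_def by (metis card_image_le card_length finite_set le_trans)
  moreover have "real (card K) \<le> real (length h) / (m - 1)"
    using card_mult_le_length_if_indeg_ge[of K "m - 1" h] m
    by (simp add: K_def pos_le_divide_eq)
  ultimately show False using budget by linarith
qed

lemma copy_strategy_move:
  fixes S :: strategy
  assumes "\<exists>w. fresh_circle n m h u w" and "0 \<le> m"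
  defines "v \<equiv> S (play S (map fst h)) u" and "w \<equiv> copy_strategy n m S h u"
  shows "w \<noteq> u \<and> {u, w} \<notin> uedge ` set h \<and> real (indeg h w) + 1 \<le> 2 * m \<and>
         (w \<noteq> v \<longrightarrow> real (indeg h w) + 1 \<le> m) \<and> (copy_allowed m h u v \<longrightarrow> w = v)"
proof (cases "copy_allowed m h u v")
  case True
  then show ?thesis by (simp add: w_def v_def copy_strategy_def copy_allowed_def)
next
  case False
  then have "fresh_circle n m h u w"
    using someI_ex[OF assms(1)] by (simp add: w_def v_def copy_strategy_def assms(1))
  then show ?thesis using False assms(2) by (auto simp: fresh_circle_def)
qed

(* g is the graph built by S1 and h the one built by S2 on the same squares. *)
definition copy_invariant :: "real \<Rightarrow> (nat \<times> nat) list \<Rightarrow> (nat \<times> nat) list \<Rightarrow> bool" where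
  "copy_invariant m g h \<longleftrightarrow>
     (\<forall>j. real (indeg h j) \<le> 2 * m) \<and>
     (\<forall>j. real (indeg h j) \<le> m + real (indeg g j)) \<and>
     (\<forall>(u, v) \<in> set h. u \<noteq> v) \<and> distinct (map uedge h) \<and>
     (\<forall>(u, v) \<in> set g. u \<noteq> v \<and> real (indeg g v) \<le> m \<longrightarrow> {u, v} \<in> uedge ` set h)"

lemma copy_invariant_snoc:
  assumes inv: "copy_invariant m g h"
    and move: "w \<noteq> u" "{u, w} \<notin> uedge ` set h" "real (indeg h w) + 1 \<le> 2 * m"
      "w \<noteq> v \<Longrightarrow> real (indeg h w) + 1 \<le> m" "copy_allowed m h u v \<Longrightarrow> w = v"
  shows "copy_invariant m (g @ [(u, v)]) (h @ [(u, w)])"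
proof -
  have indeg_h: "real (indeg h j) \<le> 2 * m" "real (indeg h j) \<le> m + real (indeg g j)" for j
    using inv by (auto simp: copy_invariant_def)
  have "{p, q} \<in> uedge ` set (h @ [(u, w)])"
    if pq: "(p, q) \<in> set (g @ [(u, v)])" "p \<noteq> q" "real (indeg (g @ [(u, v)]) q) \<le> m" for p q
  proof (cases "(p, q) \<in> set g")
    case True
    then have "{p, q} \<in> uedge ` set h"
      using inv pq by (auto simp: copy_invariant_def split: if_splits)
    then show ?thesis by auto
  next
    case False
    then have "p = u" "q = v" using pq(1) by auto
    moreover have "real (indeg h v) + 1 \<le> 2 * m"
      using indeg_h(2)[of v] pq(3) \<open>q = v\<close> by simp
    ultimately show ?thesis
      using move(5) pq(2) by (cases "{u, v} \<in> uedge ` set h") (auto simp: copy_allowed_def)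
  qed
  moreover have "real (indeg (h @ [(u, w)]) j) \<le> 2 * m" for j
    using indeg_h(1)[of j] move(3) by (cases "w = j") auto
  moreover have "real (indeg (h @ [(u, w)]) j) \<le> m + real (indeg (g @ [(u, v)]) j)" for j
    using indeg_h(2)[of j] move(4) by (cases "w = v") auto
  ultimately show ?thesis
    using inv move(1,2) unfolding copy_invariant_def by auto
qed

context
  fixes n T :: nat and m :: real and S :: strategy
  assumes m_gt_1: "1 < m" and few_rounds: "real T + real T / (m - 1) < real n"
begin

lemma copy_invariant_play:
  "length xs \<le> T \<Longrightarrow> copy_invariant m (play S xs) (play (copy_strategy n m S) xs)"
proof (induction xs rule: rev_induct)
  case Nil
  then show ?case using m_gt_1 by (simp add: copy_invariant_def)
next
  case (snoc x xs)
  have "real (length xs) / (m - 1) \<le> real T / (m - 1)"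
    using snoc.prems m_gt_1 by (simp add: divide_right_mono)
  then have "1 + real (length xs) + real (length xs) / (m - 1) < real n"
    using snoc.prems few_rounds by simp
  then have "\<exists>w. fresh_circle n m (play (copy_strategy n m S) xs) x w"
    by (intro fresh_circle_exists[OF m_gt_1]) simp
  from copy_strategy_move[OF this, of S]
  show ?case
    using snoc m_gt_1 by (auto intro!: copy_invariant_snoc)
qed

lemma well_behaved_copy_strategy: "well_behaved n (2 * m) T (copy_strategy n m S)"
  unfolding well_behaved_def
proof (intro ballI allI impI)
  fix us t j assume "us \<in> squares n T" "t \<le> T"
  then have "copy_invariant m (play S (take t us)) (play (copy_strategy n m S) (take t us))"
    by (intro copy_invariant_play) (simp add: squares_def)
  then show "real (indeg (take t (play (copy_strategy n m S) us)) j) \<le> 2 * m"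
    by (simp add: take_play copy_invariant_def)
qed

lemma simple_copy_strategy: "simple_strategy n T (copy_strategy n m S)"
  unfolding simple_strategy_def
proof
  fix us assume "us \<in> squares n T"
  then have "copy_invariant m (play S us) (play (copy_strategy n m S) us)"
    by (intro copy_invariant_play) (simp add: squares_def)
  then show "(\<forall>(u, v) \<in> set (play (copy_strategy n m S) us). u \<noteq> v) \<and>
      distinct (map uedge (play (copy_strategy n m S) us))"
    by (simp add: copy_invariant_def)
qed

lemma PM_play_copy_strategy:
  assumes us: "us \<in> squares n T" and pm: "PM n m \<delta> (play S us)"
  shows "PM n (2 * m) \<delta> (play (copy_strategy n m S) us)"
proof -
  have "copy_invariant m (play S us) (play (copy_strategy n m S) us)"
    using us by (intro copy_invariant_play) (simp add: squares_def)
  then have indeg_le: "\<forall>j. real (indeg (play (copy_strategy n m S) us) j) \<le> 2 * m"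
    and distinct: "distinct (map uedge (play (copy_strategy n m S) us))"
    and kept: "\<forall>(u, v) \<in> set (play S us). u \<noteq> v \<and> real (indeg (play S us) v) \<le> m \<longrightarrow>
      {u, v} \<in> uedge ` set (play (copy_strategy n m S) us)"
    by (simp_all add: copy_invariant_def)
  obtain V where V: "V \<subseteq> {..<n}" "has_pm_on (play S us) V"
    "\<forall>v \<in> V. real (indeg (play S us) v) \<le> m" "real (card V) \<ge> real n - 2 * real (length us) * \<delta>"
    using pm unfolding PM_def by auto
  have "has_pm_on (play (copy_strategy n m S) us) V"
  proof (rule has_pm_on_if_edges_kept[OF V(2) distinct])
    fix u v assume uv: "(u, v) \<in> set (play S us)" "u \<in> V" "v \<in> V" "u \<noteq> v"
    then have "real (indeg (play S us) v) \<le> m"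
      using V(3) by blast
    then show "{u, v} \<in> uedge ` set (play (copy_strategy n m S) us)"
      using bspec[OF kept uv(1)] uv(4) by simp
  qed
  then show ?thesis
    unfolding PM_def using V(1,4) indeg_le by (intro exI[of _ V]) simp
qed

lemma prob_graph_PM_le_copy_strategy:
  "prob_graph n T S (PM n m \<delta>) \<le> prob_graph n T (copy_strategy n m S) (PM n (2 * m) \<delta>)"
proof -
  have "finite (squares n T)"
    using finite_lists_length_eq[of "{..<n}" T] by (simp add: squares_def conj_commute)
  then have "card {us \<in> squares n T. PM n m \<delta> (play S us)}
      \<le> card {us \<in> squares n T. PM n (2 * m) \<delta> (play (copy_strategy n m S) us)}"
    by (intro card_mono) (auto intro: PM_play_copy_strategy)
  then show ?thesis
    unfolding prob_graph_def by (intro divide_right_mono) auto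
qed

end

lemma floor_rounds_within_budget:
  fixes c m :: real
  assumes c: "0 < c" "c < 1" and m: "1 / (1 - c) < m" and n: "0 < n"
  defines "T \<equiv> nat \<lfloor>c * real n\<rfloor>"
  shows "1 < m" and "real T + real T / (m - 1) < real n"
proof -
  have "1 < 1 / (1 - c)"
    using c by simp
  then show "1 < m"
    using m by linarith
  have "1 < m * (1 - c)"
    using m c by (simp add: field_simps)
  then have cm: "c * m < m - 1"
    by (simp add: algebra_simps)
  have "real T \<le> c * real n"
    using c by (simp add: T_def)
  then have "real T * m \<le> c * real n * m"
    using \<open>1 < m\<close> by (simp add: mult_right_mono)
  also have "\<dots> = real n * (c * m)"
    by simp
  also have "\<dots> < real n * (m - 1)"
    using cm n by simp
  finally have "real T * m < real n * (m - 1)" .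
  then show "real T + real T / (m - 1) < real n"
    using \<open>1 < m\<close> by (simp add: field_simps)
qed

theorem proposition9:
  fixes c :: real and \<mu> :: "nat \<Rightarrow> real"
  assumes "0 < c" "c < 1"
    and "filterlim \<mu> at_top sequentially"
  shows "\<forall>\<^sub>F n in sequentially.
           \<forall>S1. valid_strategy n S1 \<longrightarrow>
             (\<exists>S2. valid_strategy n S2 \<and>
                   well_behaved n (2 * \<mu> n) (nat \<lfloor>c * real n\<rfloor>) S2 \<and>
                   simple_strategy n (nat \<lfloor>c * real n\<rfloor>) S2 \<and>
                   prob_graph n (nat \<lfloor>c * real n\<rfloor>) S1 (PM n (\<mu> n) (1 / \<mu> n))
                   \<le> prob_graph n (nat \<lfloor>c * real n\<rfloor>) S2 (PM n (2 * \<mu> n) (1 / \<mu> n)))"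
proof -
  have "\<forall>\<^sub>F n in sequentially. 1 / (1 - c) < \<mu> n \<and> 0 < n"
    using assms(3) by (intro eventually_conj eventually_gt_at_top) (simp add: filterlim_at_top_dense)
  then show ?thesis
  proof eventually_elim
    case (elim n)
    then have budget: "1 < \<mu> n"
      "real (nat \<lfloor>c * real n\<rfloor>) + real (nat \<lfloor>c * real n\<rfloor>) / (\<mu> n - 1) < real n"
      using floor_rounds_within_budget[OF assms(1,2)] by auto
    show ?case
      using valid_copy_strategy well_behaved_copy_strategy[OF budget]
        simple_copy_strategy[OF budget] prob_graph_PM_le_copy_strategy[OF budget] by blast
  qed
qed

end
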